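(* Consider the averaged boost converter $-L\dot I=(1-u)V-V_s$, $C\dot V=(1-u)I-GV$ with scalar constants $L>0$, $C>0$, $G\ge0$, $V_s\in\mathbb{R}$, extended by $\dot u=\upsilon$ (state $(I,V,\dot I,\dot V,u)$, input $\upsilon$). Then this system is passive with respect to the storage function $S=\tfrac12L\dot I^2+\tfrac12C\dot V^2$ and the port-variables $\dot u$ and $\dot IV-\dot VI$, i.e. $\dot S\le\dot u(\dot IV-\dot VI)$.
   Context: $I$ is the inductor current, $V$ the capacitor voltage, $u\in[0,1]$ the duty cycle (averaged model). *)

theory Defs
  imports Complex_Main
begin

end

theory Submission
  imports Defs
begin

(* Differentiating the two circuit equations along a trajectory gives
   L I'' = \<upsilon> V - (1 - u) V'  and  C V'' = (1 - u) I' - \<upsilon> I - G V'.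
   In S' = L I' I'' + C V' V'' the cross terms (1 - u) I' V' cancel, so
   S' = \<upsilon> (I' V - V' I) - G V'^2, and the resistive loss G V'^2 is nonnegative. *)

lemma DERIV_unique_on_open:
  fixes f g :: "'a::real_normed_field \<Rightarrow> 'a"
  assumes "open T" and "t \<in> T" and "\<And>s. s \<in> T \<Longrightarrow> f s = g s"
    and "(f has_field_derivative D) (at t)" and "(g has_field_derivative E) (at t)"
  shows "D = E"
proof -
  have "(g has_field_derivative D) (at t)"
    using has_field_derivative_transform_within_open assms by metis
  then show ?thesis
    using DERIV_unique assms(5) by blast
qed

lemma boost_inductor_law_deriv:
  fixes L Vs t V' Id' ups :: real and T :: "real set" and V u Id :: "real \<Rightarrow> real"
  assumes "open T" and t: "t \<in> T"
    and "(V has_real_derivative V') (at t)"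
    and "(Id has_real_derivative Id') (at t)"
    and "(u has_real_derivative ups) (at t)"
    and eqI: "\<And>s. s \<in> T \<Longrightarrow> - L * Id s = (1 - u s) * V s - Vs"
  shows "L * Id' = ups * V t - (1 - u t) * V'"
proof -
  have "- L * Id' = - ups * V t + (1 - u t) * V'"
  proof (rule DERIV_unique_on_open[OF \<open>open T\<close> t eqI])
    show "((\<lambda>s. - L * Id s) has_real_derivative - L * Id') (at t)"
      using assms by (auto intro!: derivative_eq_intros)
    show "((\<lambda>s. (1 - u s) * V s - Vs) has_real_derivative - ups * V t + (1 - u t) * V') (at t)"
      using assms by (auto intro!: derivative_eq_intros)
  qed
  then show ?thesis
    by linarith
qed

lemma boost_capacitor_law_deriv:
  fixes C G t I' V' Vd' ups :: real and T :: "real set" and I V u Vd :: "real \<Rightarrow> real"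
  assumes "open T" and t: "t \<in> T"
    and "(I has_real_derivative I') (at t)"
    and "(V has_real_derivative V') (at t)"
    and "(Vd has_real_derivative Vd') (at t)"
    and "(u has_real_derivative ups) (at t)"
    and eqV: "\<And>s. s \<in> T \<Longrightarrow> C * Vd s = (1 - u s) * I s - G * V s"
  shows "C * Vd' = - ups * I t + (1 - u t) * I' - G * V'"
proof (rule DERIV_unique_on_open[OF \<open>open T\<close> t eqV])
  show "((\<lambda>s. C * Vd s) has_real_derivative C * Vd') (at t)"
    using assms by (auto intro!: derivative_eq_intros)
  show "((\<lambda>s. (1 - u s) * I s - G * V s) has_real_derivative
          - ups * I t + (1 - u t) * I' - G * V') (at t)"
    using assms by (auto intro!: derivative_eq_intros)
qed

lemma boost_power_balance:
  fixes L C G I V u Id Vd Idd Vdd ups :: real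
  assumes "L * Idd = ups * V - (1 - u) * Vd"
    and "C * Vdd = - ups * I + (1 - u) * Id - G * Vd"
  shows "Id * (L * Idd) + Vd * (C * Vdd) = ups * (Id * V - Vd * I) - G * Vd\<^sup>2"
  unfolding assms by (simp add: power2_eq_square algebra_simps)

theorem lemma3:
  fixes L C G Vs :: real
    and T :: "real set"
    and I V u Id Vd Idd Vdd ups :: "real \<Rightarrow> real"
  assumes L: "L > 0" and C: "C > 0" and G: "G \<ge> 0"
    and T: "open T"
    and dI: "\<And>t. t \<in> T \<Longrightarrow> (I has_real_derivative Id t) (at t)"
    and dV: "\<And>t. t \<in> T \<Longrightarrow> (V has_real_derivative Vd t) (at t)"
    and dId: "\<And>t. t \<in> T \<Longrightarrow> (Id has_real_derivative Idd t) (at t)"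
    and dVd: "\<And>t. t \<in> T \<Longrightarrow> (Vd has_real_derivative Vdd t) (at t)"
    and du: "\<And>t. t \<in> T \<Longrightarrow> (u has_real_derivative ups t) (at t)"
    and eqI: "\<And>t. t \<in> T \<Longrightarrow> - L * Id t = (1 - u t) * V t - Vs"
    and eqV: "\<And>t. t \<in> T \<Longrightarrow> C * Vd t = (1 - u t) * I t - G * V t"
  shows "\<forall>t\<in>T. \<exists>Sd.
           ((\<lambda>s. 1/2 * L * (Id s)\<^sup>2 + 1/2 * C * (Vd s)\<^sup>2) has_real_derivative Sd) (at t)
           \<and> Sd \<le> ups t * (Id t * V t - Vd t * I t)"
proof
  fix t assume t: "t \<in> T"
  have dS: "((\<lambda>s. 1/2 * L * (Id s)\<^sup>2 + 1/2 * C * (Vd s)\<^sup>2) has_real_derivative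
              Id t * (L * Idd t) + Vd t * (C * Vdd t)) (at t)"
    using dId[OF t] dVd[OF t]
    by (auto intro!: derivative_eq_intros simp: power2_eq_square algebra_simps)
  have "Id t * (L * Idd t) + Vd t * (C * Vdd t) = ups t * (Id t * V t - Vd t * I t) - G * (Vd t)\<^sup>2"
    using boost_inductor_law_deriv[OF T t dV[OF t] dId[OF t] du[OF t] eqI]
          boost_capacitor_law_deriv[OF T t dI[OF t] dV[OF t] dVd[OF t] du[OF t] eqV]
    by (rule boost_power_balance)
  moreover have "G * (Vd t)\<^sup>2 \<ge> 0"
    using G by simp
  ultimately show "\<exists>Sd. ((\<lambda>s. 1/2 * L * (Id s)\<^sup>2 + 1/2 * C * (Vd s)\<^sup>2) has_real_derivative Sd) (at t)
                     \<and> Sd \<le> ups t * (Id t * V t - Vd t * I t)"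
    using dS by fastforce
qed

end
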